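(* Let $(G,\tau)$ be a (Hausdorff) topological abelian group which contains a non-trivial converging sequence. Then $\operatorname{asdim}(G,\mathcal{S}_\tau)=\infty$.
   Context: $\mathcal{S}_\tau$ is the smallest group ideal on $G$ containing every set $\{x\}\cup\{x_n:n\in\omega\}$ where $(x_n)$ converges to $x$ in $(G,\tau)$. A group ideal on $G$ is a family of subsets containing all finite subsets and closed under subsets and under $(A,B)\mapsto A-B$; it defines the coarse structure on $G$ with base $\{\{(x,y):x\in A+y\}:A\in\mathcal{I}\}$, and $(G,\mathcal{I})$ denotes $G$ with this coarse structure. A converging sequence is non-trivial if it is not eventually constant. For an entourage $E$, $E[x]=\{y:(x,y)\in E\}$, $E[A]=\bigcup_{a\in A}E[a]$. $\operatorname{asdim}(X,\mathcal{E})\ge n$ means: for each $E\in\mathcal{E}$ there exist $F\in\mathcal{E}$ and a covering $\mathcal{M}$ of $X$ with each member contained in some $F[x]$, partitioned as $\mathcal{M}_0\cup\dots\cup\mathcal{M}_n$ with each $\mathcal{M}_i$ $E$-disjoint ($E[A]\cap E[B]=\emptyset$ for distinct $A,B$); $\operatorname{asdim}=\infty$ if this holds for every $n$. *)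

theory Defs
  imports "HOL-Analysis.Analysis" "HOL-Library.Extended_Nat"
begin

definition group_ideal :: "'a::ab_group_add set set \<Rightarrow> bool" where
  "group_ideal I \<longleftrightarrow>
     (\<forall>A. finite A \<longrightarrow> A \<in> I) \<and>
     (\<forall>A\<in>I. \<forall>B. B \<subseteq> A \<longrightarrow> B \<in> I) \<and>
     (\<forall>A\<in>I. \<forall>B\<in>I. {a - b | a b. a \<in> A \<and> b \<in> B} \<in> I)"

definition S_tau :: "'a::ab_group_add topology \<Rightarrow> 'a set set" where
  "S_tau X = \<Inter>{I. group_ideal I \<and>
      (\<forall>f x. limitin X f x sequentially \<longrightarrow> insert x (range f) \<in> I)}"

definition ideal_coarse :: "'a::ab_group_add set set \<Rightarrow> ('a \<times> 'a) set set" where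
  "ideal_coarse I = {E. \<exists>A\<in>I. E \<subseteq> {(x, y). x - y \<in> A}}"

definition asdim_le :: "'a set \<Rightarrow> ('a \<times> 'a) set set \<Rightarrow> nat \<Rightarrow> bool" where
  "asdim_le X \<E> n \<longleftrightarrow>
     (\<forall>E\<in>\<E>. \<exists>F\<in>\<E>. \<exists>M :: nat \<Rightarrow> 'a set set.
        \<Union>(\<Union>i\<le>n. M i) = X \<and>
        (\<forall>i\<le>n. \<forall>A\<in>M i. \<exists>x. A \<subseteq> F `` {x}) \<and>
        (\<forall>i\<le>n. \<forall>A\<in>M i. \<forall>B\<in>M i. A \<noteq> B \<longrightarrow> E `` A \<inter> E `` B = {}))"

definition asdim :: "'a set \<Rightarrow> ('a \<times> 'a) set set \<Rightarrow> enat" where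
  "asdim X \<E> = (INF n \<in> {n. asdim_le X \<E> n}. enat n)"

end

theory Submission
  imports Defs "HOL-Library.Ramsey"
begin

text \<open>Every member of \<open>S_tau\<close> lies in a sum \<open>K\<^sub>1 + ... + K\<^sub>m\<close> of convergent sequences
  with their limits, as such sets already form a group ideal. Take an injective null sequence \<open>x\<close>
  (a subsequence of \<open>f - l\<close> for the given non-trivial \<open>f \<longlonglongrightarrow> l\<close>) and the entourage
  \<open>E = {(u, v). u - v \<in> insert 0 (range x)}\<close>. Given a cover witnessing \<open>asdim \<le> n\<close> for \<open>E\<close>,
  colour each \<open>(m+1)\<close>-set \<open>T\<close> of indices by the subfamily containing \<open>\<Sum>t\<in>T. x t\<close>. Ramsey's
  theorem yields an infinite homogeneous \<open>Y\<close>; exchanging one index keeps the sum \<open>E\<close>-close to a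
  common point, so all these sums lie in one member of the cover. As that member is bounded,
  \<open>y - (\<Sum>t\<in>T. x t) \<in> K\<^sub>1 + ... + K\<^sub>m\<close> for some \<open>y\<close>, some sequences \<open>K\<^sub>i\<close> and all
  \<open>(m+1)\<close>-subsets \<open>T\<close> of \<open>Y\<close>. But the limit of an injective sequence of points admitting
  representations with \<open>a\<close> summands at their limits admits one with \<open>a + 1\<close> such summands;
  letting the indices of \<open>T\<close> escape to infinity one at a time, \<open>y\<close> would need \<open>m + 1\<close> of its
  \<open>m\<close> summands at their limits.\<close>

lemma sum_lessThan_add:
  fixes f :: "nat \<Rightarrow> 'a::comm_monoid_add"
  shows "(\<Sum>i<m + l. f i) = (\<Sum>i<m. f i) + (\<Sum>i<l. f (m + i))"
  by (induction l) (simp_all add: ac_simps)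

lemma limitin_inj_into_convergent_range:
  assumes lim: "limitin X s c sequentially" and "inj h" and range: "range h \<subseteq> insert c (range s)"
  shows "limitin X h c sequentially"
  unfolding limitin_def
proof (intro conjI allI impI)
  show "c \<in> topspace X" using lim by (simp add: limitin_def)
  fix U assume U: "openin X U \<and> c \<in> U"
  then have "eventually (\<lambda>n. s n \<in> U) sequentially"
    using lim by (simp add: limitin_def)
  then obtain N where N: "\<And>n. n \<ge> N \<Longrightarrow> s n \<in> U"
    unfolding eventually_sequentially by blast
  have "{k. h k \<notin> U} \<subseteq> h -` s ` {..<N}"
  proof
    fix k assume "k \<in> {k. h k \<notin> U}"
    then have k: "h k \<notin> U" by simp
    have "h k \<in> insert c (range s)"
      using range by (rule subsetD) (rule rangeI)
    with k U have "h k \<in> range s" by auto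
    then obtain n where n: "h k = s n" by blast
    with k N have "n < N" by (metis not_le)
    with n show "k \<in> h -` s ` {..<N}" by blast
  qed
  then have "finite {k. h k \<notin> U}"
    using \<open>inj h\<close> by (meson finite_imageI finite_lessThan finite_subset finite_vimageI)
  then show "eventually (\<lambda>k. h k \<in> U) sequentially"
    by (simp add: cofinite_eq_sequentially[symmetric] eventually_cofinite)
qed

lemma infinite_subset_const_or_inj_on:
  assumes "infinite Z"
  obtains Y where "Y \<subseteq> Z" "infinite Y" "(\<forall>j\<in>Y. \<forall>j'\<in>Y. f j = f j') \<or> inj_on f Y"
proof -
  define colour where "colour P = (if \<forall>j\<in>P. \<forall>j'\<in>P. f j = f j' then 0 else 1::nat)" for P
  have colour_pair: "colour {j, j'} = (if f j = f j' then 0 else 1)" for j j'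
    by (auto simp: colour_def)
  have "\<forall>j\<in>Z. \<forall>j'\<in>Z. j \<noteq> j' \<longrightarrow> colour {j, j'} < 2"
    by (simp add: colour_pair)
  then obtain Y t where Y: "Y \<subseteq> Z" "infinite Y" "\<forall>j\<in>Y. \<forall>j'\<in>Y. j \<noteq> j' \<longrightarrow> colour {j, j'} = t"
    using Ramsey2[OF assms, of colour 2] by metis
  have "(\<forall>j\<in>Y. \<forall>j'\<in>Y. f j = f j') \<or> inj_on f Y"
  proof (cases "t = 0")
    case True
    have "f j = f j'" if "j \<in> Y" "j' \<in> Y" for j j'
    proof (cases "j = j'")
      case False
      then have "colour {j, j'} = 0" using Y(3) that True by blast
      then show ?thesis by (simp add: colour_pair split: if_splits)
    qed simp
    then show ?thesis by blast
  next
    case False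
    have "inj_on f Y"
    proof (rule inj_onI, rule ccontr)
      fix j j' assume "j \<in> Y" "j' \<in> Y" "f j = f j'" "j \<noteq> j'"
      then have "colour {j, j'} = t" using Y(3) by blast
      with \<open>f j = f j'\<close> False show False by (simp add: colour_pair)
    qed
    then show ?thesis by (rule disjI2)
  qed
  with Y(1,2) show ?thesis by (rule that)
qed

lemma infinite_not_eventually_const:
  fixes f :: "nat \<Rightarrow> 'a"
  assumes "\<not> (\<exists>N. \<forall>n\<ge>N. f n = f N)"
  shows "infinite {n. f n \<noteq> l}"
proof
  assume "finite {n. f n \<noteq> l}"
  then obtain N where N: "{n. f n \<noteq> l} \<subseteq> {..<N}"
    using finite_nat_bounded by blast
  have "f n = l" if "n \<ge> N" for n
  proof (rule ccontr)
    assume "f n \<noteq> l"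
    with N have "n < N"
      by blast
    with that show False
      by simp
  qed
  then have "\<forall>n\<ge>N. f n = f N"
    by simp
  with assms show False
    by blast
qed

lemma infinite_subset_coordinates_const_or_inj_on:
  fixes R :: "'a \<Rightarrow> nat \<Rightarrow> 'b"
  assumes "infinite Z"
  obtains Y where "Y \<subseteq> Z" "infinite Y"
    "\<forall>i<m. (\<forall>j\<in>Y. \<forall>j'\<in>Y. R j i = R j' i) \<or> inj_on (\<lambda>j. R j i) Y"
proof -
  have "\<exists>Y\<subseteq>Z. infinite Y \<and> (\<forall>i<m. (\<forall>j\<in>Y. \<forall>j'\<in>Y. R j i = R j' i) \<or> inj_on (\<lambda>j. R j i) Y)"
  proof (induction m)
    case 0
    then show ?case using assms by blast
  next
    case (Suc m)
    then obtain Y where Y: "Y \<subseteq> Z" "infinite Y"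
      "\<forall>i<m. (\<forall>j\<in>Y. \<forall>j'\<in>Y. R j i = R j' i) \<or> inj_on (\<lambda>j. R j i) Y" by blast
    obtain Y' where Y': "Y' \<subseteq> Y" "infinite Y'"
      "(\<forall>j\<in>Y'. \<forall>j'\<in>Y'. R j m = R j' m) \<or> inj_on (\<lambda>j. R j m) Y'"
      by (rule infinite_subset_const_or_inj_on[OF Y(2), of "\<lambda>j. R j m"])
    have "(\<forall>j\<in>Y'. \<forall>j'\<in>Y'. R j i = R j' i) \<or> inj_on (\<lambda>j. R j i) Y'" if "i < Suc m" for i
    proof (cases "i = m")
      case True
      with Y'(3) show ?thesis by simp
    next
      case False
      with that Y(3) have "(\<forall>j\<in>Y. \<forall>j'\<in>Y. R j i = R j' i) \<or> inj_on (\<lambda>j. R j i) Y"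
        by simp
      with Y'(1) show ?thesis by (auto intro: inj_on_subset)
    qed
    then show ?case using Y(1) Y'(1,2) by (intro exI[of _ Y']) auto
  qed
  then show ?thesis
    by (elim exE conjE) (rule that)
qed

lemma strict_mono_coordinates_const_or_inj:
  fixes R :: "nat \<Rightarrow> nat \<Rightarrow> 'b"
  obtains e :: "nat \<Rightarrow> nat" and Q where "strict_mono e" "Q \<subseteq> {..<m}"
    "\<forall>i\<in>Q. inj (\<lambda>k. R (e k) i)" "\<forall>i\<in>Q. \<forall>k. R (e k) i \<noteq> c i"
    "\<forall>i<m. i \<notin> Q \<longrightarrow> (\<forall>k. R (e k) i = R (e 0) i)"
proof -
  obtain Y where "Y \<subseteq> UNIV" "infinite Y"
    and Y: "\<forall>i<m. (\<forall>j\<in>Y. \<forall>j'\<in>Y. R j i = R j' i) \<or> inj_on (\<lambda>j. R j i) Y"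
    by (rule infinite_subset_coordinates_const_or_inj_on[OF infinite_UNIV_nat])
  define Q where "Q = {i. i < m \<and> inj_on (\<lambda>j. R j i) Y}"
  have const: "R j i = R j' i" if "i < m" "i \<notin> Q" "j \<in> Y" "j' \<in> Y" for i j j'
  proof -
    have "\<not> inj_on (\<lambda>j. R j i) Y"
      using that(1,2) unfolding Q_def by blast
    with Y[rule_format, OF \<open>i < m\<close>] have "\<forall>j\<in>Y. \<forall>j'\<in>Y. R j i = R j' i"
      by blast
    with that(3,4) show ?thesis
      by blast
  qed
  define Bad where "Bad = (\<Union>i\<in>Q. {j\<in>Y. R j i = c i})"
  have "finite {j\<in>Y. R j i = c i}" if "i \<in> Q" for i
  proof (rule inj_on_finite)
    show "inj_on (\<lambda>j. R j i) {j\<in>Y. R j i = c i}"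
      using that unfolding Q_def by (auto intro: inj_on_subset)
  qed auto
  then have "finite Bad"
    unfolding Bad_def Q_def by auto
  with \<open>infinite Y\<close> have "infinite (Y - Bad)"
    by simp
  define e where "e = enumerate (Y - Bad)"
  have e: "strict_mono e" "\<And>k. e k \<in> Y - Bad"
    unfolding e_def using \<open>infinite (Y - Bad)\<close> by (rule strict_mono_enumerate, rule enumerate_in_set)
  show ?thesis
  proof (rule that)
    show "strict_mono e" "Q \<subseteq> {..<m}"
      using e(1) by (auto simp: Q_def)
    show "\<forall>i\<in>Q. inj (\<lambda>k. R (e k) i)"
    proof (intro ballI injI)
      fix i k k' assume "i \<in> Q" "R (e k) i = R (e k') i"
      with e(2) have "e k = e k'"
        unfolding Q_def by (auto dest: inj_onD)
      then show "k = k'"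
        using strict_mono_eq[OF e(1)] by simp
    qed
    show "\<forall>i\<in>Q. \<forall>k. R (e k) i \<noteq> c i"
      using e(2) unfolding Bad_def by auto
    show "\<forall>i<m. i \<notin> Q \<longrightarrow> (\<forall>k. R (e k) i = R (e 0) i)"
      using const e(2) by blast
  qed
qed

lemma card_eq_Diff_nonempty:
  assumes "finite T" and "card T' = card T" and "T - T' \<noteq> {}"
  shows "T' - T \<noteq> {}"
proof
  assume "T' - T = {}"
  then have "T' \<subseteq> T"
    by blast
  then have "T' = T"
    using assms(2) by (rule card_subset_eq[OF assms(1)])
  with assms(3) show False
    by simp
qed

lemma exchange_invariant_eq:
  assumes exchange: "\<And>S a b. S \<subseteq> Y \<Longrightarrow> finite S \<Longrightarrow> card S = k \<Longrightarrow> a \<in> S \<Longrightarrow> b \<in> Y - S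
      \<Longrightarrow> \<phi> (insert b (S - {a})) = \<phi> S"
    and T: "T \<subseteq> Y" "finite T" "card T = k"
    and T': "T' \<subseteq> Y" "finite T'" "card T' = k"
  shows "\<phi> T = \<phi> T'"
proof -
  have "\<phi> T = \<phi> T'" if "card (T - T') = d" "T \<subseteq> Y" "finite T" "card T = k" for d T
    using that
  proof (induction d arbitrary: T)
    case 0
    then have "T \<subseteq> T'" using T' by auto
    then show ?case using card_subset_eq[OF T'(2) \<open>T \<subseteq> T'\<close>] "0.prems"(4) T'(3) by simp
  next
    case (Suc d)
    have "T - T' \<noteq> {}"
    proof
      assume "T - T' = {}"
      with Suc.prems(1) show False by simp
    qed
    then obtain a where a: "a \<in> T" "a \<notin> T'" by blast
    have "card T' = card T"
      using Suc.prems(4) T'(3) by simp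
    from card_eq_Diff_nonempty[OF Suc.prems(3) this \<open>T - T' \<noteq> {}\<close>]
    obtain b where b: "b \<in> T'" "b \<notin> T" by blast
    define T1 where "T1 = insert b (T - {a})"
    have "T1 - T' = (T - T') - {a}"
      using a b by (auto simp: T1_def)
    then have "card (T1 - T') = d"
      using Suc.prems(1,3) a by (simp add: card_Diff_singleton)
    moreover have "card T1 = card T"
      using Suc.prems(3) b by (simp add: T1_def card.remove[OF Suc.prems(3) a(1)])
    moreover have "T1 \<subseteq> Y" "finite T1"
      using Suc.prems(2,3) b T' by (auto simp: T1_def)
    ultimately have "\<phi> T1 = \<phi> T'"
      using Suc.IH Suc.prems(4) by simp
    moreover have "b \<in> Y - T"
      using b T' by blast
    then have "\<phi> T1 = \<phi> T"
      unfolding T1_def by (rule exchange[OF Suc.prems(2-4) a(1)])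
    ultimately show ?case by simp
  qed
  from this[OF refl T] show ?thesis .
qed

lemma disjoint_neighbourhoods_eq:
  assumes "\<forall>A\<in>\<M>. \<forall>B\<in>\<M>. A \<noteq> B \<longrightarrow> E `` A \<inter> E `` B = {}"
    and "A \<in> \<M>" "B \<in> \<M>" "u \<in> A" "u' \<in> B" "(u, v) \<in> E" "(u', v) \<in> E"
  shows "A = B"
  using assms by blast

lemma sum_cell_eq:
  fixes x :: "nat \<Rightarrow> 'a::comm_monoid_add" and cell :: "'a \<Rightarrow> 'a set"
  assumes disjoint: "\<forall>A\<in>\<M>. \<forall>B\<in>\<M>. A \<noteq> B \<longrightarrow> E `` A \<inter> E `` B = {}"
    and close: "\<And>a v. (x a + v, v) \<in> E"
    and cell_in: "\<And>T. T \<subseteq> Y \<Longrightarrow> finite T \<Longrightarrow> card T = k \<Longrightarrow> cell (sum x T) \<in> \<M>"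
    and in_cell: "\<And>z. z \<in> cell z"
    and T: "T \<subseteq> Y" "finite T" "card T = k" and T': "T' \<subseteq> Y" "finite T'" "card T' = k"
  shows "cell (sum x T) = cell (sum x T')"
proof (rule exchange_invariant_eq[of Y k "\<lambda>T. cell (sum x T)", OF _ T T'])
  fix S a b assume S: "S \<subseteq> Y" "finite S" "card S = k" and a: "a \<in> S" and b: "b \<in> Y - S"
  let ?S' = "insert b (S - {a})" and ?v = "sum x (S - {a})"
  have "card ?S' = Suc (card (S - {a}))"
    using S(2) b by simp
  also have "\<dots> = k"
    using card.remove[OF S(2) a] S(3) by simp
  finally have "card ?S' = k" .
  then have cell_S': "cell (sum x ?S') \<in> \<M>"
    using S(1,2) b by (intro cell_in) auto
  have "sum x ?S' = x b + ?v" "sum x S = x a + ?v"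
    using S(2) a b by (simp_all add: sum.remove)
  then have "(sum x ?S', ?v) \<in> E" "(sum x S, ?v) \<in> E"
    using close by simp_all
  then show "cell (sum x ?S') = cell (sum x S)"
    by (rule disjoint_neighbourhoods_eq[OF disjoint cell_S' cell_in[OF S] in_cell in_cell])
qed

lemma indexed_cover_choice:
  assumes "\<Union>(\<Union>i\<le>n. M i) = UNIV"
  obtains col cell where "\<forall>z. col z \<le> n \<and> cell z \<in> M (col z) \<and> z \<in> cell z"
proof -
  have "\<forall>z. \<exists>i. \<exists>W. i \<le> n \<and> W \<in> M i \<and> z \<in> W"
  proof
    fix z
    have "z \<in> \<Union>(\<Union>i\<le>n. M i)"
      using assms by simp
    then show "\<exists>i. \<exists>W. i \<le> n \<and> W \<in> M i \<and> z \<in> W"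
      by blast
  qed
  from choice[OF this] obtain col where "\<forall>z. \<exists>W. col z \<le> n \<and> W \<in> M (col z) \<and> z \<in> W" ..
  from choice[OF this] obtain cell
    where "\<forall>z. col z \<le> n \<and> cell z \<in> M (col z) \<and> z \<in> cell z" ..
  then show ?thesis
    by (rule that)
qed

lemma homogeneous_member_of_cover:
  fixes x :: "nat \<Rightarrow> 'a::comm_monoid_add" and n :: nat
  assumes cover: "\<Union>(\<Union>i\<le>n. M i) = UNIV"
    and disjoint: "\<forall>i\<le>n. \<forall>A\<in>M i. \<forall>B\<in>M i. A \<noteq> B \<longrightarrow> E `` A \<inter> E `` B = {}"
    and close: "\<And>a v. (x a + v, v) \<in> E"
  obtains Y i W where "infinite Y" "i \<le> n" "W \<in> M i"
    "\<forall>T. T \<subseteq> Y \<and> finite T \<and> card T = k \<longrightarrow> sum x T \<in> W"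
proof -
  obtain col cell where "\<forall>z. col z \<le> n \<and> cell z \<in> M (col z) \<and> z \<in> cell z"
    using cover by (rule indexed_cover_choice)
  then have col_le: "\<And>z. col z \<le> n" and cell_in: "\<And>z. cell z \<in> M (col z)"
    and in_cell: "\<And>z. z \<in> cell z"
    by simp_all
  have "\<forall>T. T \<subseteq> UNIV \<and> finite T \<and> card T = k \<longrightarrow> col (sum x T) < Suc n"
    using col_le by (simp add: less_Suc_eq_le)
  from Ramsey[OF infinite_UNIV_nat this] obtain Y i where Y: "infinite Y" "i < Suc n"
    and homogeneous: "\<forall>T. T \<subseteq> Y \<and> finite T \<and> card T = k \<longrightarrow> col (sum x T) = i"
    by (elim exE conjE) (rule that)
  have "i \<le> n"
    using Y(2) by simp
  have cell_M: "cell (sum x T) \<in> M i" if "T \<subseteq> Y" "finite T" "card T = k" for T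
  proof -
    have "col (sum x T) = i"
      using homogeneous that by blast
    with cell_in[of "sum x T"] show ?thesis
      by simp
  qed
  have disjoint_i: "\<forall>A\<in>M i. \<forall>B\<in>M i. A \<noteq> B \<longrightarrow> E `` A \<inter> E `` B = {}"
    using disjoint \<open>i \<le> n\<close> by blast
  obtain T0 where T0: "T0 \<subseteq> Y" "finite T0" "card T0 = k"
    using infinite_arbitrarily_large[OF Y(1), of k] by (elim exE conjE) (rule that)
  show ?thesis
  proof (rule that)
    show "infinite Y" "i \<le> n"
      by fact+
    show "cell (sum x T0) \<in> M i"
      using T0 by (rule cell_M)
    show "\<forall>T. T \<subseteq> Y \<and> finite T \<and> card T = k \<longrightarrow> sum x T \<in> cell (sum x T0)"
    proof (intro allI impI)
      fix T assume "T \<subseteq> Y \<and> finite T \<and> card T = k"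
      then have T: "T \<subseteq> Y" "finite T" "card T = k"
        by simp_all
      have "cell (sum x T) = cell (sum x T0)"
        using disjoint_i close cell_M in_cell T T0 by (rule sum_cell_eq)
      then show "sum x T \<in> cell (sum x T0)"
        using in_cell[of "sum x T"] by simp
    qed
  qed
qed


definition sum_level :: "nat \<Rightarrow> (nat \<Rightarrow> 'a) \<Rightarrow> (nat \<Rightarrow> nat \<Rightarrow> 'a) \<Rightarrow> nat \<Rightarrow> 'a::comm_monoid_add set" where
  "sum_level m c s a = {\<Sum>i<m. r i | r. (\<forall>i<m. r i \<in> insert (c i) (range (s i)))
      \<and> a \<le> card {i. i < m \<and> r i = c i}}"

definition convergent_sum_ideal :: "'a::ab_group_add topology \<Rightarrow> 'a set set" where
  "convergent_sum_ideal X = {A. \<exists>m c s. (\<forall>i<m. limitin X (s i) (c i) sequentially)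
      \<and> A \<subseteq> sum_level m c s 0}"

lemma convergent_sum_idealI:
  assumes "\<And>i. i < m \<Longrightarrow> limitin X (s i) (c i) sequentially" and "A \<subseteq> sum_level m c s 0"
  shows "A \<in> convergent_sum_ideal X"
  using assms unfolding convergent_sum_ideal_def by (intro CollectI exI[of _ m] exI[of _ c] exI[of _ s]) simp

lemma convergent_sum_idealE:
  assumes "A \<in> convergent_sum_ideal X"
  obtains m c s where "A \<subseteq> sum_level m c s 0" "\<forall>i<m. limitin X (s i) (c i) sequentially"
  using assms unfolding convergent_sum_ideal_def by auto

lemma convergent_sum_ideal_mono:
  assumes "A \<in> convergent_sum_ideal X" and "B \<subseteq> A"
  shows "B \<in> convergent_sum_ideal X"
  using assms by (metis convergent_sum_idealE convergent_sum_idealI order_trans)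

lemma sum_level_empty:
  assumes "m < a"
  shows "sum_level m c s a = {}"
proof -
  have "\<not> a \<le> card {i. i < m \<and> r i = c i}" for r :: "nat \<Rightarrow> 'a"
  proof -
    have "{i. i < m \<and> r i = c i} \<subseteq> {..<m}" by auto
    from card_mono[OF finite_lessThan this] assms show ?thesis by simp
  qed
  then show ?thesis
    unfolding sum_level_def by blast
qed

lemma sum_level_one: "sum_level 1 c s 0 = insert (c 0) (range (s 0))"
proof
  show "sum_level 1 c s 0 \<subseteq> insert (c 0) (range (s 0))"
    unfolding sum_level_def by auto
  show "insert (c 0) (range (s 0)) \<subseteq> sum_level 1 c s 0"
  proof
    fix z assume "z \<in> insert (c 0) (range (s 0))"
    then show "z \<in> sum_level 1 c s 0"
      unfolding sum_level_def by (intro CollectI exI[of _ "\<lambda>_. z"]) auto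
  qed
qed

lemma diff_mem_sum_level_concat:
  fixes c :: "nat \<Rightarrow> 'a::ab_group_add"
  assumes "a \<in> sum_level m c s 0" and "b \<in> sum_level m' c' s' 0"
  shows "a - b \<in> sum_level (m + m') (\<lambda>i. if i < m then c i else - c' (i - m))
    (\<lambda>i. if i < m then s i else uminus \<circ> s' (i - m)) 0"
proof -
  obtain r where r: "\<forall>i<m. r i \<in> insert (c i) (range (s i))" "a = (\<Sum>i<m. r i)"
    using assms(1) unfolding sum_level_def by auto
  obtain r' where r': "\<forall>i<m'. r' i \<in> insert (c' i) (range (s' i))" "b = (\<Sum>i<m'. r' i)"
    using assms(2) unfolding sum_level_def by auto
  define q where "q i = (if i < m then r i else - r' (i - m))" for i
  have "(\<Sum>i<m + m'. q i) = a - b"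
    by (simp add: sum_lessThan_add q_def r(2) r'(2) sum_negf)
  moreover have "\<forall>i<m + m'. q i \<in> insert (if i < m then c i else - c' (i - m))
      (range (if i < m then s i else uminus \<circ> s' (i - m)))"
    using r(1) r'(1) by (auto simp: q_def image_iff)
  ultimately show ?thesis
    unfolding sum_level_def by (intro CollectI exI[of _ q]) simp
qed

lemma sum_level_choice:
  assumes "range g \<subseteq> sum_level m c s a"
  obtains R where "\<forall>j. (\<forall>i<m. R j i \<in> insert (c i) (range (s i)))
      \<and> g j = (\<Sum>i<m. R j i) \<and> a \<le> card {i. i < m \<and> R j i = c i}"
proof -
  have "\<forall>j. \<exists>r. (\<forall>i<m. r i \<in> insert (c i) (range (s i))) \<and> g j = (\<Sum>i<m. r i)
      \<and> a \<le> card {i. i < m \<and> r i = c i}"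
  proof
    fix j
    have "g j \<in> sum_level m c s a"
      using assms by (rule subsetD) (rule rangeI)
    then show "\<exists>r. (\<forall>i<m. r i \<in> insert (c i) (range (s i))) \<and> g j = (\<Sum>i<m. r i)
      \<and> a \<le> card {i. i < m \<and> r i = c i}"
      unfolding sum_level_def by auto
  qed
  from choice[OF this] obtain R where "\<forall>j. (\<forall>i<m. R j i \<in> insert (c i) (range (s i)))
      \<and> g j = (\<Sum>i<m. R j i) \<and> a \<le> card {i. i < m \<and> R j i = c i}" ..
  then show ?thesis
    by (rule that)
qed

lemma sum_level_SucI:
  assumes r: "\<forall>i<m. r i \<in> insert (c i) (range (s i))" and Q: "Q \<subseteq> {..<m}" "Q \<noteq> {}"
    and at_limit: "\<forall>i\<in>Q. r i = c i" and card: "a \<le> card {i. i < m \<and> i \<notin> Q \<and> r i = c i}"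
  shows "(\<Sum>i<m. r i) \<in> sum_level m c s (Suc a)"
proof -
  let ?S = "{i. i < m \<and> i \<notin> Q \<and> r i = c i}"
  have "finite Q"
    using Q(1) finite_subset by blast
  with Q(2) have "0 < card Q"
    by (simp add: card_gt_0_iff)
  with card have "Suc a \<le> card Q + card ?S"
    by linarith
  also have "\<dots> = card (Q \<union> ?S)"
    using \<open>finite Q\<close> by (intro card_Un_disjoint[symmetric]) auto
  also have "\<dots> \<le> card {i. i < m \<and> r i = c i}"
    using Q(1) at_limit by (intro card_mono) auto
  finally show ?thesis
    using r unfolding sum_level_def by blast
qed

locale ab_group_topology =
  fixes X :: "'a::ab_group_add topology"
  assumes topspace_UNIV: "topspace X = UNIV"
    and continuous_add: "continuous_map (prod_topology X X) X (\<lambda>(x, y). x + y)"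
    and continuous_uminus: "continuous_map X X uminus"
    and Hausdorff: "Hausdorff_space X"
begin

lemma limitin_add:
  assumes "limitin X f a F" "limitin X g b F"
  shows "limitin X (\<lambda>k. f k + g k) (a + b) F"
proof -
  have "limitin (prod_topology X X) (\<lambda>k. (f k, g k)) (a, b) F"
    using assms by (simp add: limitin_pairwise o_def)
  from continuous_map_limit[OF continuous_add this] show ?thesis
    by (simp add: o_def)
qed

lemma limitin_uminus:
  assumes "limitin X f a F"
  shows "limitin X (\<lambda>k. - f k) (- a) F"
  using continuous_map_limit[OF continuous_uminus assms] by (simp add: o_def)

lemma limitin_diff:
  assumes "limitin X f a F" "limitin X g b F"
  shows "limitin X (\<lambda>k. f k - g k) (a - b) F"
  using limitin_add[OF assms(1) limitin_uminus[OF assms(2)]] by simp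

lemma limitin_sum:
  assumes "finite I" "\<And>i. i \<in> I \<Longrightarrow> limitin X (\<lambda>k. f k i) (l i) F"
  shows "limitin X (\<lambda>k. \<Sum>i\<in>I. f k i) (\<Sum>i\<in>I. l i) F"
  using assms by (induction I rule: finite_induct) (simp_all add: topspace_UNIV limitin_add)

lemma limitin_unique:
  assumes "limitin X f a sequentially" "limitin X f b sequentially"
  shows "a = b"
  using limitin_Hausdorff_unique[OF assms _ Hausdorff] by simp

lemma convergent_set_in_convergent_sum_ideal:
  assumes "limitin X f l sequentially"
  shows "insert l (range f) \<in> convergent_sum_ideal X"
proof (rule convergent_sum_idealI)
  show "insert l (range f) \<subseteq> sum_level 1 (\<lambda>_. l) (\<lambda>_. f) 0"
    unfolding sum_level_one by simp
qed (use assms in simp)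

lemma finite_in_convergent_sum_ideal:
  assumes "finite A"
  shows "A \<in> convergent_sum_ideal X"
proof -
  obtain xs where xs: "set xs = A"
    using assms finite_list by blast
  define f where "f n = (if n < length xs then xs ! n else 0)" for n
  have "limitin X f 0 sequentially"
    by (rule limitin_eventually) (auto simp: topspace_UNIV f_def eventually_sequentially intro!: exI[of _ "length xs"])
  then have "insert 0 (range f) \<in> convergent_sum_ideal X"
    by (rule convergent_set_in_convergent_sum_ideal)
  moreover have "A \<subseteq> insert 0 (range f)"
    using xs by (auto simp: f_def in_set_conv_nth)
  ultimately show ?thesis
    by (rule convergent_sum_ideal_mono)
qed

lemma group_ideal_convergent_sum_ideal: "group_ideal (convergent_sum_ideal X)"
  unfolding group_ideal_def
proof (intro conjI ballI allI impI)
  fix A :: "'a set"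
  assume "finite A"
  then show "A \<in> convergent_sum_ideal X"
    by (rule finite_in_convergent_sum_ideal)
next
  fix A B
  assume "A \<in> convergent_sum_ideal X" "B \<subseteq> A"
  then show "B \<in> convergent_sum_ideal X"
    by (rule convergent_sum_ideal_mono)
next
  fix A B
  assume "A \<in> convergent_sum_ideal X" "B \<in> convergent_sum_ideal X"
  obtain m c s where A: "A \<subseteq> sum_level m c s 0"
    and lim: "\<forall>i<m. limitin X (s i) (c i) sequentially"
    using \<open>A \<in> convergent_sum_ideal X\<close> by (rule convergent_sum_idealE)
  obtain m' c' s' where B: "B \<subseteq> sum_level m' c' s' 0"
    and lim': "\<forall>i<m'. limitin X (s' i) (c' i) sequentially"
    using \<open>B \<in> convergent_sum_ideal X\<close> by (rule convergent_sum_idealE)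
  define c'' where "c'' i = (if i < m then c i else - c' (i - m))" for i
  define s'' where "s'' i = (if i < m then s i else uminus \<circ> s' (i - m))" for i
  have "limitin X (s'' i) (c'' i) sequentially" if "i < m + m'" for i
    using lim lim' that by (auto simp: c''_def s''_def o_def intro: limitin_uminus)
  moreover have "{a - b | a b. a \<in> A \<and> b \<in> B} \<subseteq> sum_level (m + m') c'' s'' 0"
  proof safe
    fix a b assume "a \<in> A" "b \<in> B"
    with A B show "a - b \<in> sum_level (m + m') c'' s'' 0"
      unfolding c''_def s''_def by (intro diff_mem_sum_level_concat) auto
  qed
  ultimately show "{a - b | a b. a \<in> A \<and> b \<in> B} \<in> convergent_sum_ideal X"
    by (rule convergent_sum_idealI)
qed

lemma S_tau_subset_convergent_sum_ideal: "S_tau X \<subseteq> convergent_sum_ideal X"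
proof -
  have "convergent_sum_ideal X \<in> {I. group_ideal I
      \<and> (\<forall>f x. limitin X f x sequentially \<longrightarrow> insert x (range f) \<in> I)}"
    using group_ideal_convergent_sum_ideal convergent_set_in_convergent_sum_ideal by blast
  then show ?thesis
    unfolding S_tau_def by (rule Inter_lower)
qed

end

locale convergent_family = ab_group_topology X for X :: "'a::ab_group_add topology" +
  fixes m :: nat and c :: "nat \<Rightarrow> 'a" and s :: "nat \<Rightarrow> nat \<Rightarrow> 'a"
  assumes limitin_family: "\<And>i. i < m \<Longrightarrow> limitin X (s i) (c i) sequentially"
begin

lemma coordinatewise_convergent_subsequence:
  fixes R :: "nat \<Rightarrow> nat \<Rightarrow> 'a"
  assumes inj: "inj (\<lambda>j. \<Sum>i<m. R j i)"
    and R: "\<And>j i. i < m \<Longrightarrow> R j i \<in> insert (c i) (range (s i))"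
  obtains e :: "nat \<Rightarrow> nat" and Q where "strict_mono e" "Q \<noteq> {}" "Q \<subseteq> {..<m}"
    "\<forall>i\<in>Q. limitin X (\<lambda>k. R (e k) i) (c i) sequentially" "\<forall>i\<in>Q. \<forall>k. R (e k) i \<noteq> c i"
    "\<forall>i<m. i \<notin> Q \<longrightarrow> (\<forall>k. R (e k) i = R (e 0) i)"
proof -
  obtain e :: "nat \<Rightarrow> nat" and Q where e: "strict_mono e" and Q: "Q \<subseteq> {..<m}"
    and inj_Q: "\<forall>i\<in>Q. inj (\<lambda>k. R (e k) i)" and not_limit: "\<forall>i\<in>Q. \<forall>k. R (e k) i \<noteq> c i"
    and const: "\<forall>i<m. i \<notin> Q \<longrightarrow> (\<forall>k. R (e k) i = R (e 0) i)"
    by (rule strict_mono_coordinates_const_or_inj)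
  have "Q \<noteq> {}"
  proof
    assume "Q = {}"
    with const have "R (e 1) i = R (e 0) i" if "i < m" for i
      using that by blast
    then have "(\<Sum>i<m. R (e 1) i) = (\<Sum>i<m. R (e 0) i)"
      by (intro sum.cong) auto
    then have "e 1 = e 0"
      by (rule injD[OF inj])
    with strict_mono_eq[OF e] show False
      by simp
  qed
  show ?thesis
  proof (rule that)
    show "\<forall>i\<in>Q. limitin X (\<lambda>k. R (e k) i) (c i) sequentially"
    proof
      fix i assume "i \<in> Q"
      then have lim_i: "limitin X (s i) (c i) sequentially"
        and range_i: "range (\<lambda>k. R (e k) i) \<subseteq> insert (c i) (range (s i))"
        using Q limitin_family R by auto
      from inj_Q \<open>i \<in> Q\<close> have "inj (\<lambda>k. R (e k) i)" ..
      from limitin_inj_into_convergent_range[OF lim_i this range_i]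
      show "limitin X (\<lambda>k. R (e k) i) (c i) sequentially" .
    qed
  qed fact+
qed

lemma limit_of_inj_seq_in_sum_level:
  assumes "inj g" and lim: "limitin X g w sequentially" and g: "range g \<subseteq> sum_level m c s a"
  shows "w \<in> sum_level m c s (Suc a)"
proof -
  obtain R where R: "\<forall>j. (\<forall>i<m. R j i \<in> insert (c i) (range (s i)))
      \<and> g j = (\<Sum>i<m. R j i) \<and> a \<le> card {i. i < m \<and> R j i = c i}"
    using g by (rule sum_level_choice)
  then have g_eq: "g = (\<lambda>j. \<Sum>i<m. R j i)"
    by auto
  have R_mem: "\<And>j i. i < m \<Longrightarrow> R j i \<in> insert (c i) (range (s i))"
    using R by simp
  obtain e :: "nat \<Rightarrow> nat" and Q where e: "strict_mono e" and Q: "Q \<noteq> {}" "Q \<subseteq> {..<m}"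
    and lim_Q: "\<forall>i\<in>Q. limitin X (\<lambda>k. R (e k) i) (c i) sequentially"
    and not_limit: "\<forall>i\<in>Q. \<forall>k. R (e k) i \<noteq> c i"
    and const: "\<forall>i<m. i \<notin> Q \<longrightarrow> (\<forall>k. R (e k) i = R (e 0) i)"
    using \<open>inj g\<close>[unfolded g_eq] R_mem by (rule coordinatewise_convergent_subsequence)
  define r where "r i = (if i \<in> Q then c i else R (e 0) i)" for i
  have "limitin X (\<lambda>k. R (e k) i) (r i) sequentially" if "i < m" for i
  proof (cases "i \<in> Q")
    case True
    then show ?thesis using lim_Q by (simp add: r_def)
  next
    case False
    have "(\<lambda>k. R (e k) i) = (\<lambda>k. R (e 0) i)"
    proof
      fix k
      show "R (e k) i = R (e 0) i"
        using const that False by blast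
    qed
    then show ?thesis
      using False by (simp add: r_def topspace_UNIV)
  qed
  then have "limitin X (\<lambda>k. \<Sum>i<m. R (e k) i) (\<Sum>i<m. r i) sequentially"
    by (intro limitin_sum) auto
  moreover have "limitin X (\<lambda>k. \<Sum>i<m. R (e k) i) w sequentially"
    using limitin_subsequence[OF e lim] by (simp add: g_eq o_def)
  ultimately have w: "w = (\<Sum>i<m. r i)"
    by (rule limitin_unique[rotated])
  have "a \<le> card {i. i < m \<and> R (e 0) i = c i}"
    using R by simp
  also have "\<dots> \<le> card {i. i < m \<and> i \<notin> Q \<and> r i = c i}"
    using not_limit by (intro card_mono) (auto simp: r_def)
  finally have "a \<le> card {i. i < m \<and> i \<notin> Q \<and> r i = c i}" .
  then show ?thesis
    unfolding w using R_mem Q by (intro sum_level_SucI) (auto simp: r_def)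
qed

lemma mem_sum_level_Suc_of_translates:
  fixes x :: "nat \<Rightarrow> 'a"
  assumes "inj x" and lim_x: "limitin X x 0 sequentially" and "infinite Z"
    and translates: "\<And>j. j \<in> Z \<Longrightarrow> y - x j \<in> sum_level m c s a"
  shows "y \<in> sum_level m c s (Suc a)"
proof -
  define e where "e = enumerate Z"
  have e: "strict_mono e" "\<And>k. e k \<in> Z"
    unfolding e_def using \<open>infinite Z\<close> by (rule strict_mono_enumerate, rule enumerate_in_set)
  have "inj (\<lambda>k. y - x (e k))"
  proof (rule injI)
    fix k k' assume "y - x (e k) = y - x (e k')"
    then have "e k = e k'"
      using \<open>inj x\<close> by (simp add: inj_eq)
    then show "k = k'"
      using strict_mono_eq[OF e(1)] by simp
  qed
  moreover have "limitin X (\<lambda>k. y - x (e k)) (y - 0) sequentially"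
    using limitin_subsequence[OF e(1) lim_x] by (intro limitin_diff) (simp_all add: topspace_UNIV o_def)
  then have "limitin X (\<lambda>k. y - x (e k)) y sequentially"
    by simp
  moreover have "range (\<lambda>k. y - x (e k)) \<subseteq> sum_level m c s a"
    using translates e(2) by auto
  ultimately show ?thesis
    by (rule limit_of_inj_seq_in_sum_level)
qed

lemma mem_sum_level_from_subset_sums:
  fixes x :: "nat \<Rightarrow> 'a"
  assumes "inj x" and "limitin X x 0 sequentially" and "infinite J"
    and "\<And>T. T \<subseteq> J \<Longrightarrow> finite T \<Longrightarrow> card T = h \<Longrightarrow> y - sum x T \<in> sum_level m c s a"
  shows "y \<in> sum_level m c s (a + h)"
  using assms(4)
proof (induction h arbitrary: a)
  case 0
  then show ?case
    using "0.prems"[of "{}"] by simp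
next
  case (Suc h)
  have "y - sum x T \<in> sum_level m c s (Suc a)" if T: "T \<subseteq> J" "finite T" "card T = h" for T
  proof (rule mem_sum_level_Suc_of_translates[OF assms(1,2)])
    show "infinite (J - T)"
      using \<open>infinite J\<close> T(2) by simp
  next
    fix j assume "j \<in> J - T"
    then have "y - sum x T - x j = y - sum x (insert j T)"
      using T(2) by (simp add: algebra_simps)
    also have "\<dots> \<in> sum_level m c s a"
      using \<open>j \<in> J - T\<close> T by (intro Suc.prems) auto
    finally show "y - sum x T - x j \<in> sum_level m c s a" .
  qed
  then have "y \<in> sum_level m c s (Suc a + h)"
    by (rule Suc.IH)
  then show ?case
    by simp
qed

end

context ab_group_topology
begin

lemma ex_inj_null_sequence:
  assumes lim: "limitin X f l sequentially" and "\<not> (\<exists>N. \<forall>n\<ge>N. f n = f N)"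
  obtains x where "inj x" "limitin X x 0 sequentially"
proof -
  obtain Y where Y: "Y \<subseteq> {n. f n \<noteq> l}" "infinite Y" "(\<forall>j\<in>Y. \<forall>j'\<in>Y. f j = f j') \<or> inj_on f Y"
    by (rule infinite_subset_const_or_inj_on[OF infinite_not_eventually_const[OF assms(2)]])
  define e where "e = enumerate Y"
  have e: "strict_mono e" "\<And>k. e k \<in> Y"
    unfolding e_def using Y(2) by (rule strict_mono_enumerate, rule enumerate_in_set)
  have lim_e: "limitin X (\<lambda>k. f (e k)) l sequentially"
    using limitin_subsequence[OF e(1) lim] by (simp add: o_def)
  have "inj_on f Y"
  proof (rule ccontr)
    assume "\<not> inj_on f Y"
    with Y(3) have const: "\<forall>j\<in>Y. \<forall>j'\<in>Y. f j = f j'"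
      by blast
    have "(\<lambda>k. f (e k)) = (\<lambda>k. f (e 0))"
    proof
      fix k
      show "f (e k) = f (e 0)"
        using const e(2) by blast
    qed
    with lim_e have "limitin X (\<lambda>k. f (e 0)) l sequentially"
      by simp
    moreover have "limitin X (\<lambda>k. f (e 0)) (f (e 0)) sequentially"
      by (simp add: topspace_UNIV)
    ultimately have "f (e 0) = l"
      by (rule limitin_unique[rotated])
    with e(2)[of 0] Y(1) show False
      by auto
  qed
  show ?thesis
  proof (rule that)
    show "inj (\<lambda>k. f (e k) - l)"
    proof (rule injI)
      fix k k' assume "f (e k) - l = f (e k') - l"
      then have "e k = e k'"
        using inj_onD[OF \<open>inj_on f Y\<close> _ e(2) e(2)] by simp
      then show "k = k'"
        using strict_mono_eq[OF e(1)] by simp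
    qed
    show "limitin X (\<lambda>k. f (e k) - l) 0 sequentially"
      using limitin_diff[OF lim_e, of "\<lambda>_. l" l] by (simp add: topspace_UNIV)
  qed
qed

lemma ideal_coarse_S_tau_subset_sum_level:
  assumes "F \<in> ideal_coarse (S_tau X)"
  obtains m c s where "\<forall>i<m. limitin X (s i) (c i) sequentially"
    "F \<subseteq> {(u, v). u - v \<in> sum_level m c s 0}"
proof -
  obtain A where "A \<in> S_tau X" and F: "F \<subseteq> {(u, v). u - v \<in> A}"
    using assms unfolding ideal_coarse_def by blast
  then have "A \<in> convergent_sum_ideal X"
    using S_tau_subset_convergent_sum_ideal by blast
  then obtain m c s where "A \<subseteq> sum_level m c s 0" and lim: "\<forall>i<m. limitin X (s i) (c i) sequentially"
    by (rule convergent_sum_idealE)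
  with F have "F \<subseteq> {(u, v). u - v \<in> sum_level m c s 0}"
    by blast
  with lim show ?thesis
    by (rule that)
qed

lemma not_asdim_le_S_tau:
  fixes x :: "nat \<Rightarrow> 'a"
  assumes "inj x" and lim_x: "limitin X x 0 sequentially"
  shows "\<not> asdim_le UNIV (ideal_coarse (S_tau X)) n"
proof
  assume "asdim_le UNIV (ideal_coarse (S_tau X)) n"
  define E where "E = {(u, v). u - v \<in> insert 0 (range x)}"
  have "insert 0 (range x) \<in> S_tau X"
    using lim_x unfolding S_tau_def by blast
  then have "E \<in> ideal_coarse (S_tau X)"
    unfolding ideal_coarse_def E_def by blast
  with \<open>asdim_le UNIV (ideal_coarse (S_tau X)) n\<close>
  have "\<exists>F\<in>ideal_coarse (S_tau X). \<exists>M :: nat \<Rightarrow> 'a set set. \<Union>(\<Union>i\<le>n. M i) = UNIV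
      \<and> (\<forall>i\<le>n. \<forall>A\<in>M i. \<exists>y. A \<subseteq> F `` {y})
      \<and> (\<forall>i\<le>n. \<forall>A\<in>M i. \<forall>B\<in>M i. A \<noteq> B \<longrightarrow> E `` A \<inter> E `` B = {})"
    unfolding asdim_le_def by (rule bspec)
  then obtain F M
    where F: "F \<in> ideal_coarse (S_tau X)" and cover: "\<Union>(\<Union>i\<le>n. M i) = UNIV"
      and bounded: "\<forall>i\<le>n. \<forall>A\<in>M i. \<exists>y. A \<subseteq> F `` {y}"
      and disjoint: "\<forall>i\<le>n. \<forall>A\<in>M i. \<forall>B\<in>M i. A \<noteq> B \<longrightarrow> E `` A \<inter> E `` B = {}"
    by (elim bexE exE conjE) (rule that)
  obtain m c s where lim: "\<forall>i<m. limitin X (s i) (c i) sequentially"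
    and F_sub: "F \<subseteq> {(u, v). u - v \<in> sum_level m c s 0}"
    using F by (rule ideal_coarse_S_tau_subset_sum_level)
  interpret convergent_family X m c s
    using lim by (intro convergent_family.intro ab_group_topology_axioms convergent_family_axioms.intro) simp
  have close: "(x a + v, v) \<in> E" for a v
    by (simp add: E_def)
  obtain Y i W where Y: "infinite Y" "i \<le> n" "W \<in> M i"
    and sums_in_W: "\<forall>T. T \<subseteq> Y \<and> finite T \<and> card T = Suc m \<longrightarrow> sum x T \<in> W"
    by (rule homogeneous_member_of_cover[OF cover disjoint close])
  obtain y where "W \<subseteq> F `` {y}"
    using bounded Y(2,3) by blast
  have "y - sum x T \<in> sum_level m c s 0" if "T \<subseteq> Y" "finite T" "card T = Suc m" for T
    using sums_in_W that \<open>W \<subseteq> F `` {y}\<close> F_sub by blast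
  then have "y \<in> sum_level m c s (0 + Suc m)"
    by (rule mem_sum_level_from_subset_sums[OF \<open>inj x\<close> lim_x Y(1)])
  then show False
    using sum_level_empty[of m "Suc m" c s] by simp
qed

end

theorem theorem5:
  fixes X :: "'a::ab_group_add topology"
  assumes "topspace X = UNIV"
    and "continuous_map (prod_topology X X) X (\<lambda>(x, y). x + y)"
    and "continuous_map X X uminus"
    and "Hausdorff_space X"
    and "\<exists>f x. limitin X f x sequentially \<and> \<not> (\<exists>N. \<forall>n\<ge>N. f n = f N)"
  shows "asdim UNIV (ideal_coarse (S_tau X)) = \<infinity>"
proof -
  interpret ab_group_topology X
    using assms(1-4) by unfold_locales
  obtain f l where "limitin X f l sequentially" "\<not> (\<exists>N. \<forall>n\<ge>N. f n = f N)"
    using assms(5) by blast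
  then obtain x where "inj x" "limitin X x 0 sequentially"
    by (rule ex_inj_null_sequence)
  then have "{n. asdim_le UNIV (ideal_coarse (S_tau X)) n} = {}"
    using not_asdim_le_S_tau by blast
  then show ?thesis
    unfolding asdim_def by (simp only:) (simp add: top_enat_def)
qed

end
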